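(* Let $T$ be a quantizable map satisfying Condition 1 and let $U=U_\Bbbk$ be a quantization of $T$ with respect to a partition $\mathcal M_\Bbbk$ of size $N_\Bbbk$ from a sequence satisfying Condition 2. There is a constant $D(T)$, independent of $n$ and $N_\Bbbk$, such that for all $f,g\in\mathrm{Lip}(I_c)$ and all integers $n\geq1$, $$\|[U^{-n}\mathrm{Op}_\Bbbk(f)U^n,\mathrm{Op}_\Bbbk(g)]\|\leq 2D(T)\,\|g\|_{\mathrm{Lip}}\|f\|_{\mathrm{Lip}}\,\frac{\Lambda_{\max}^n}{N_\Bbbk},$$ where $\Lambda_{\max}=\max_j\Lambda_j$ and $\|\cdot\|$ is the operator norm.
   Context: Condition 1: $T:[0,1]\to[0,1]$, integers $\Lambda_1,\dots,\Lambda_l\geq2$ with $\sum\Lambda_j^{-1}=1$, consecutive intervals $I_1,\dots,I_l$ with $|I_j|=\Lambda_j^{-1}$, and $T$ affine with slope $\Lambda_j$ on $I_j$ mapping $I_j$ onto $[0,1]$. $\mathcal M_\Bbbk$ is the partition of $[0,1]$ into $E_i=[(i-1)/N_\Bbbk,i/N_\Bbbk]$; Condition 2 for a sequence $(\mathcal M_\Bbbk)$: $N_{\Bbbk+1}/N_\Bbbk$ is an integer $>1$ and all endpoints of the $I_j$ are endpoints of $\mathcal M_1$. With $B_\Bbbk(i,j)=|E_i\cap T^{-1}E_j|/|E_i|$, a quantization is a unitary matrix $U_\Bbbk$ with $B_\Bbbk(j,i)=|U_\Bbbk(i,j)|^2$; $T$ is quantizable if such $U_\Bbbk$ exist for all $\Bbbk$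 for some sequence satisfying Condition 2. $\mathrm{Op}_\Bbbk(f)$ is the diagonal matrix with $(i,i)$ entry $N_\Bbbk\int_{E_i}f\,dx$. $I_c$ is $[0,1]$ with $0$ and $1$ identified, with metric $d(x,y)=\min\{|x-y|,|x-y-1|\}$; $\|f\|_{\mathrm{Lip}}=\sup|f|+\sup_{x\neq y}|f(x)-f(y)|/d(x,y)$, and $\mathrm{Lip}(I_c)$ is the space where this is finite. *)

theory Defs
  imports "HOL-Analysis.Analysis"
begin

(* Condition 1: T on [0,1], slopes Lambda 1..Lambda l (integers >= 2, sum of reciprocals 1),
   consecutive intervals I_j = [a (j-1), a j] with a 0 = 0 and |I_j| = 1/Lambda j,
   T affine with slope Lambda j on I_j mapping I_j onto [0,1].
   (At the shared endpoints the two affine pieces disagree; T is only constrained to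
   take values in [0,1] there.) *)
definition cond1 :: "(real \<Rightarrow> real) \<Rightarrow> nat \<Rightarrow> (nat \<Rightarrow> nat) \<Rightarrow> (nat \<Rightarrow> real) \<Rightarrow> bool" where
  "cond1 T l \<Lambda> a \<longleftrightarrow>
     l \<ge> 1 \<and>
     (\<forall>j\<in>{1..l}. \<Lambda> j \<ge> 2) \<and>
     (\<Sum>j=1..l. 1 / real (\<Lambda> j)) = 1 \<and>
     a 0 = 0 \<and>
     (\<forall>j\<in>{1..l}. a j = a (j - 1) + 1 / real (\<Lambda> j)) \<and>
     (\<forall>x\<in>{0..1}. T x \<in> {0..1}) \<and>
     (\<forall>j\<in>{1..l}. \<forall>x. a (j - 1) < x \<and> x < a j \<longrightarrow> T x = real (\<Lambda> j) * (x - a (j - 1)))"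

definition cond2 :: "(nat \<Rightarrow> nat) \<Rightarrow> nat \<Rightarrow> (nat \<Rightarrow> real) \<Rightarrow> bool" where
  "cond2 N l a \<longleftrightarrow>
     (\<forall>k\<ge>1. N k > 0) \<and>
     (\<forall>k\<ge>1. N k dvd N (Suc k) \<and> N (Suc k) div N k > 1) \<and>
     (\<forall>j\<le>l. \<exists>m::nat. m \<le> N 1 \<and> a j = real m / real (N 1))"

(* the cells E_i of M with N cells; 0-based: cell i = [i/N, (i+1)/N], i < N *)
definition cell :: "nat \<Rightarrow> nat \<Rightarrow> real set" where
  "cell N i = {real i / real N .. real (Suc i) / real N}"

definition Bmat :: "(real \<Rightarrow> real) \<Rightarrow> nat \<Rightarrow> nat \<Rightarrow> nat \<Rightarrow> real" where
  "Bmat T N i j =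
     measure lebesgue (cell N i \<inter> {x\<in>{0..1}. T x \<in> cell N j}) / measure lebesgue (cell N i)"

(* N x N complex matrices as functions nat => nat => complex, indices < N *)
definition is_unitary :: "nat \<Rightarrow> (nat \<Rightarrow> nat \<Rightarrow> complex) \<Rightarrow> bool" where
  "is_unitary N U \<longleftrightarrow>
     (\<forall>i<N. \<forall>j<N. (\<Sum>m<N. cnj (U m i) * U m j) = (if i = j then 1 else 0))"

definition is_quantization :: "(real \<Rightarrow> real) \<Rightarrow> nat \<Rightarrow> (nat \<Rightarrow> nat \<Rightarrow> complex) \<Rightarrow> bool" where
  "is_quantization T N U \<longleftrightarrow>
     is_unitary N U \<and> (\<forall>i<N. \<forall>j<N. Bmat T N j i = (cmod (U i j))\<^sup>2)"

definition quantizable :: "(real \<Rightarrow> real) \<Rightarrow> nat \<Rightarrow> (nat \<Rightarrow> real) \<Rightarrow> bool" where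
  "quantizable T l a \<longleftrightarrow>
     (\<exists>N. cond2 N l a \<and> (\<forall>k\<ge>1. \<exists>U. is_quantization T (N k) U))"

definition mmul :: "nat \<Rightarrow> (nat \<Rightarrow> nat \<Rightarrow> complex) \<Rightarrow> (nat \<Rightarrow> nat \<Rightarrow> complex) \<Rightarrow> (nat \<Rightarrow> nat \<Rightarrow> complex)" where
  "mmul N A B = (\<lambda>i j. \<Sum>m<N. A i m * B m j)"

definition mid :: "nat \<Rightarrow> nat \<Rightarrow> complex" where
  "mid = (\<lambda>i j. if i = j then 1 else 0)"

fun mpow :: "nat \<Rightarrow> (nat \<Rightarrow> nat \<Rightarrow> complex) \<Rightarrow> nat \<Rightarrow> (nat \<Rightarrow> nat \<Rightarrow> complex)" where
  "mpow N A 0 = mid"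
| "mpow N A (Suc n) = mmul N (mpow N A n) A"

definition madj :: "(nat \<Rightarrow> nat \<Rightarrow> complex) \<Rightarrow> (nat \<Rightarrow> nat \<Rightarrow> complex)" where
  "madj A = (\<lambda>i j. cnj (A j i))"

definition commutator :: "nat \<Rightarrow> (nat \<Rightarrow> nat \<Rightarrow> complex) \<Rightarrow> (nat \<Rightarrow> nat \<Rightarrow> complex) \<Rightarrow> (nat \<Rightarrow> nat \<Rightarrow> complex)" where
  "commutator N A B = (\<lambda>i j. mmul N A B i j - mmul N B A i j)"

definition Op :: "nat \<Rightarrow> (real \<Rightarrow> complex) \<Rightarrow> (nat \<Rightarrow> nat \<Rightarrow> complex)" where
  "Op N f = (\<lambda>i j. if i = j then of_nat N * integral (cell N i) f else 0)"

definition opnorm :: "nat \<Rightarrow> (nat \<Rightarrow> nat \<Rightarrow> complex) \<Rightarrow> real" where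
  "opnorm N A = Sup {sqrt (\<Sum>i<N. (cmod (\<Sum>j<N. A i j * v j))\<^sup>2) | v.
                       (\<Sum>j<N. (cmod (v j))\<^sup>2) \<le> 1}"

(* the circle metric on [0,1] with 0 ~ 1 *)
definition dc :: "real \<Rightarrow> real \<Rightarrow> real" where
  "dc x y = min \<bar>x - y\<bar> (1 - \<bar>x - y\<bar>)"

definition in_LipIc :: "(real \<Rightarrow> complex) \<Rightarrow> bool" where
  "in_LipIc f \<longleftrightarrow> bounded (f ` {0..1}) \<and>
     (\<exists>L. \<forall>x\<in>{0..1}. \<forall>y\<in>{0..1}. cmod (f x - f y) \<le> L * dc x y)"

definition lip_norm :: "(real \<Rightarrow> complex) \<Rightarrow> real" where
  "lip_norm f = (SUP x\<in>{0..1}. cmod (f x)) +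
     (SUP p\<in>{(x, y). x \<in> {0..1} \<and> y \<in> {0..1} \<and> dc x y > 0}.
        cmod (f (fst p) - f (snd p)) / dc (fst p) (snd p))"

end

theory Submission
  imports Defs
begin

text \<open>Let \<open>L = max\<^sub>j \<Lambda>\<^sub>j\<close> and \<open>V = U\<^sup>n\<close>.  The commutator equals \<open>V\<^sup>* [Op f, H] V\<close> with
  \<open>H = V Op(g) V\<^sup>*\<close>, and \<open>\<parallel>H\<parallel> \<le> sup |g|\<close>.  An entry \<open>U(i,j) \<noteq> 0\<close> forces the cell \<open>E\<^sub>j\<close> to meet
  \<open>T\<^sup>-\<^sup>1 E\<^sub>i\<close>, and \<open>T\<close> is \<open>L\<close>-Lipschitz for the circle metric, so the entries of \<open>U\<^sup>n\<close>, and hence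
  those of \<open>H\<close>, vanish between points at circle distance more than \<open>\<rho> = 6 L\<^sup>n / N\<close>.  Near each
  point \<open>c\<close> of a grid of mesh \<open>\<rho>\<close>, the diagonal matrix \<open>Op f\<close> differs from the scalar \<open>f c\<close>,
  which commutes with \<open>H\<close>, by \<open>O(Lip(f) (\<rho> + 1/N))\<close> on the rows within \<open>2\<rho>\<close> of \<open>c\<close>; as
  these neighbourhoods overlap boundedly, \<open>\<parallel>[Op f, H]\<parallel> = O(Lip(f) sup |g| L\<^sup>n / N)\<close>.\<close>

section \<open>Matrices acting on \<open>\<complex>\<^sup>N\<close>\<close>

definition vtrunc :: "nat \<Rightarrow> (nat \<Rightarrow> complex) \<Rightarrow> nat \<Rightarrow> complex" where
  "vtrunc N v = (\<lambda>i. if i < N then v i else 0)"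

text \<open>A vector of \<open>\<complex>\<^sup>N\<close> is a function \<open>nat \<Rightarrow> complex\<close> of which only the first \<open>N\<close> entries
  matter; \<open>mvmul\<close> pads its result with zeros, so that identities between matrix actions
  hold as equalities of functions.\<close>

definition mvmul :: "nat \<Rightarrow> (nat \<Rightarrow> nat \<Rightarrow> complex) \<Rightarrow> (nat \<Rightarrow> complex) \<Rightarrow> nat \<Rightarrow> complex" where
  "mvmul N A v = (\<lambda>i. if i < N then (\<Sum>j<N. A i j * v j) else 0)"

definition sqnorm :: "nat \<Rightarrow> (nat \<Rightarrow> complex) \<Rightarrow> real" where
  "sqnorm N v = (\<Sum>i<N. (cmod (v i))\<^sup>2)"

definition cinner :: "nat \<Rightarrow> (nat \<Rightarrow> complex) \<Rightarrow> (nat \<Rightarrow> complex) \<Rightarrow> complex" where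
  "cinner N x y = (\<Sum>i<N. x i * cnj (y i))"

definition diag_mat :: "(nat \<Rightarrow> complex) \<Rightarrow> nat \<Rightarrow> nat \<Rightarrow> complex" where
  "diag_mat \<phi> = (\<lambda>i j. if i = j then \<phi> i else 0)"

lemma mvmul_vtrunc [simp]: "mvmul N A (vtrunc N v) = mvmul N A v"
  by (auto simp: mvmul_def vtrunc_def intro!: sum.cong ext)

lemma vtrunc_mvmul [simp]: "vtrunc N (mvmul N A v) = mvmul N A v"
  by (auto simp: mvmul_def vtrunc_def)

lemma sum_delta_mult:
  "(\<Sum>k<(N::nat). (if i = k then c else 0) * (v k :: complex)) = (if i < N then c * v i else 0)"
  by (induction N) (auto simp: less_Suc_eq)

lemma mvmul_mid: "mvmul N mid v = vtrunc N v"
  by (auto simp: mvmul_def vtrunc_def mid_def sum_delta_mult)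

lemma mvmul_diag_mat: "mvmul N (diag_mat \<phi>) v = (\<lambda>i. if i < N then \<phi> i * v i else 0)"
  by (auto simp: mvmul_def diag_mat_def sum_delta_mult)

lemma mvmul_basis: "i < N \<Longrightarrow> mvmul N A (\<lambda>k. if k = j then 1 else 0) i = (if j < N then A i j else 0)"
  by (auto simp: mvmul_def if_distrib[of "(*) _"] sum.delta cong: if_cong)

lemma mvmul_mmul: "mvmul N (mmul N A B) v = mvmul N A (mvmul N B v)"
proof (rule ext)
  fix i
  show "mvmul N (mmul N A B) v i = mvmul N A (mvmul N B v) i"
  proof (cases "i < N")
    case True
    have "(\<Sum>j<N. (\<Sum>m<N. A i m * B m j) * v j) = (\<Sum>j<N. \<Sum>m<N. A i m * (B m j * v j))"
      by (simp add: sum_distrib_right mult.assoc)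
    also have "\<dots> = (\<Sum>m<N. \<Sum>j<N. A i m * (B m j * v j))"
      by (rule sum.swap)
    also have "\<dots> = (\<Sum>m<N. A i m * mvmul N B v m)"
      by (auto simp: sum_distrib_left mvmul_def intro!: sum.cong)
    finally show ?thesis
      using True by (simp add: mvmul_def mmul_def)
  qed (simp add: mvmul_def)
qed

lemma mvmul_diff: "mvmul N A (\<lambda>i. x i - y i) = (\<lambda>i. mvmul N A x i - mvmul N A y i)"
  by (auto simp: mvmul_def algebra_simps sum_subtractf)

lemma mvmul_commutator:
  "mvmul N (commutator N A B) v = (\<lambda>i. mvmul N A (mvmul N B v) i - mvmul N B (mvmul N A v) i)"
proof -
  have "mvmul N (commutator N A B) v = (\<lambda>i. mvmul N (mmul N A B) v i - mvmul N (mmul N B A) v i)"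
    by (auto simp: mvmul_def commutator_def algebra_simps sum_subtractf)
  then show ?thesis
    by (simp add: mvmul_mmul)
qed

lemma mvmul_mpow_commute: "mvmul N (mpow N A n) (mvmul N A w) = mvmul N A (mvmul N (mpow N A n) w)"
  by (induction n arbitrary: w) (simp_all add: mvmul_mid mvmul_mmul)

lemma sqnorm_nonneg: "0 \<le> sqnorm N v"
  by (simp add: sqnorm_def sum_nonneg)

lemma cinner_self: "cinner N x x = of_real (sqnorm N x)"
  unfolding cinner_def sqnorm_def of_real_sum by (intro sum.cong refl complex_norm_square[symmetric])

lemma cinner_vtrunc_left: "cinner N (vtrunc N x) y = cinner N x y"
  by (auto simp: cinner_def vtrunc_def intro!: sum.cong)

lemma cinner_mvmul_left: "cinner N (mvmul N A x) y = cinner N x (mvmul N (madj A) y)"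
proof -
  have "cinner N (mvmul N A x) y = (\<Sum>i<N. \<Sum>j<N. A i j * x j * cnj (y i))"
    by (simp add: cinner_def mvmul_def sum_distrib_right)
  also have "\<dots> = (\<Sum>j<N. \<Sum>i<N. A i j * x j * cnj (y i))"
    by (rule sum.swap)
  also have "\<dots> = cinner N x (mvmul N (madj A) y)"
    by (auto simp: cinner_def mvmul_def madj_def sum_distrib_left intro!: sum.cong)
  finally show ?thesis .
qed

lemma cinner_Cauchy_Schwarz: "cmod (cinner N x y) \<le> sqrt (sqnorm N x) * sqrt (sqnorm N y)"
proof -
  have "cmod (cinner N x y) \<le> (\<Sum>i<N. \<bar>cmod (x i)\<bar> * \<bar>cmod (y i)\<bar>)"
    unfolding cinner_def by (rule order_trans[OF norm_sum]) (simp add: norm_mult)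
  also have "\<dots> \<le> L2_set (\<lambda>i. cmod (x i)) {..<N} * L2_set (\<lambda>i. cmod (y i)) {..<N}"
    by (rule L2_set_mult_ineq)
  finally show ?thesis
    by (simp add: L2_set_def sqnorm_def)
qed

lemma cinner_mpow_madj: "cinner N (mvmul N (mpow N (madj U) n) x) y = cinner N x (mvmul N (mpow N U n) y)"
proof (induction n arbitrary: x)
  case 0
  show ?case
    by (simp add: mvmul_mid cinner_vtrunc_left) (simp add: cinner_def vtrunc_def)
next
  case (Suc n)
  have "cinner N (mvmul N (mpow N (madj U) (Suc n)) x) y
      = cinner N (mvmul N (madj U) x) (mvmul N (mpow N U n) y)"
    by (simp add: mvmul_mmul Suc)
  also have "\<dots> = cinner N x (mvmul N U (mvmul N (mpow N U n) y))"
    using cinner_mvmul_left[of N "madj U"] by (simp add: madj_def)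
  also have "\<dots> = cinner N x (mvmul N (mpow N U (Suc n)) y)"
    by (simp add: mvmul_mmul mvmul_mpow_commute)
  finally show ?case .
qed

lemma mpow_madj_entry:
  assumes "i < N" "j < N"
  shows "mpow N (madj U) n i j = cnj (mpow N U n j i)"
proof -
  have cinner_basis:
    "cinner N x (\<lambda>m. if m = k then 1 else 0) = x k"
    "cinner N (\<lambda>m. if m = k then 1 else 0) x = cnj (x k)" if "k < N" for x k
    using that by (simp_all add: cinner_def if_distrib[of cnj] if_distrib[of "(*) (x _)"]
        if_distrib[of "\<lambda>y. y * _"] cong: if_cong)
  have "cinner N (mvmul N (mpow N (madj U) n) (\<lambda>m. if m = j then 1 else 0)) (\<lambda>m. if m = i then 1 else 0)
      = cinner N (\<lambda>m. if m = j then 1 else 0) (mvmul N (mpow N U n) (\<lambda>m. if m = i then 1 else 0))"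
    by (rule cinner_mpow_madj)
  then show ?thesis
    using assms by (simp add: cinner_basis mvmul_basis)
qed

lemma unitary_left_inverse:
  assumes "is_unitary N U"
  shows "mvmul N (madj U) (mvmul N U v) = vtrunc N v"
proof (rule ext)
  fix i
  show "mvmul N (madj U) (mvmul N U v) i = vtrunc N v i"
  proof (cases "i < N")
    case True
    have "(\<Sum>j<N. cnj (U j i) * mvmul N U v j) = (\<Sum>j<N. \<Sum>k<N. cnj (U j i) * (U j k * v k))"
      by (auto simp: mvmul_def sum_distrib_left intro!: sum.cong)
    also have "\<dots> = (\<Sum>k<N. \<Sum>j<N. cnj (U j i) * (U j k * v k))"
      by (rule sum.swap)
    also have "\<dots> = (\<Sum>k<N. (\<Sum>j<N. cnj (U j i) * U j k) * v k)"
      by (simp add: sum_distrib_right mult.assoc)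
    also have "\<dots> = (\<Sum>k<N. (if i = k then 1 else 0) * v k)"
      using assms True unfolding is_unitary_def by (intro sum.cong) auto
    finally show ?thesis
      using True by (simp add: mvmul_def madj_def vtrunc_def sum_delta_mult)
  qed (simp add: mvmul_def vtrunc_def)
qed

lemma mpow_unitary_left_inverse:
  assumes "is_unitary N U"
  shows "mvmul N (mpow N (madj U) n) (mvmul N (mpow N U n) w) = vtrunc N w"
proof (induction n arbitrary: w)
  case 0
  show ?case
    by (rule ext) (simp add: mvmul_mid vtrunc_def)
next
  case (Suc n)
  have "mvmul N (mpow N (madj U) (Suc n)) (mvmul N (mpow N U (Suc n)) w)
     = mvmul N (mpow N (madj U) n) (mvmul N (madj U) (mvmul N U (mvmul N (mpow N U n) w)))"
    by (simp add: mvmul_mmul mvmul_mpow_commute)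
  also have "\<dots> = vtrunc N w"
    by (simp add: unitary_left_inverse[OF assms] Suc)
  finally show ?case .
qed

lemma sqnorm_mpow_unitary:
  assumes "is_unitary N U"
  shows "sqnorm N (mvmul N (mpow N U n) w) = sqnorm N w"
proof -
  let ?Vw = "mvmul N (mpow N U n) w"
  have "of_real (sqnorm N ?Vw) = cnj (cinner N ?Vw ?Vw)"
    by (simp add: cinner_self)
  also have "\<dots> = cnj (cinner N (mvmul N (mpow N (madj U) n) ?Vw) w)"
    by (simp add: cinner_mpow_madj)
  also have "\<dots> = of_real (sqnorm N w)"
    by (simp add: mpow_unitary_left_inverse[OF assms] cinner_vtrunc_left cinner_self)
  finally show ?thesis
    by simp
qed

lemma sqnorm_mpow_madj_le:
  assumes "is_unitary N U"
  shows "sqnorm N (mvmul N (mpow N (madj U) n) z) \<le> sqnorm N z"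
proof -
  let ?y = "mvmul N (mpow N (madj U) n) z"
  have "of_real (sqnorm N ?y) = cinner N z (mvmul N (mpow N U n) ?y)"
    by (simp add: cinner_self[symmetric] cinner_mpow_madj)
  then have "sqnorm N ?y = cmod (cinner N z (mvmul N (mpow N U n) ?y))"
    by (simp flip: \<open>of_real (sqnorm N ?y) = _\<close> add: sqnorm_nonneg)
  also have "\<dots> \<le> sqrt (sqnorm N z) * sqrt (sqnorm N ?y)"
    using cinner_Cauchy_Schwarz[of N z "mvmul N (mpow N U n) ?y"] by (simp add: sqnorm_mpow_unitary[OF assms])
  finally have le: "sqrt (sqnorm N ?y) * sqrt (sqnorm N ?y) \<le> sqrt (sqnorm N z) * sqrt (sqnorm N ?y)"
    by (simp add: sqnorm_nonneg)
  have cancel: "s \<le> t" if "s * s \<le> t * s" "0 \<le> s" "0 \<le> t" for s t :: real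
    using that mult_right_le_imp_le[of s s t] by (cases "s = 0") auto
  have "sqrt (sqnorm N ?y) \<le> sqrt (sqnorm N z)"
    by (rule cancel[OF le]) (simp_all add: sqnorm_nonneg)
  then show ?thesis
    by simp
qed

lemma opnorm_le:
  assumes "0 \<le> c" and bound: "\<And>v. sqnorm N (mvmul N A v) \<le> c\<^sup>2 * sqnorm N v"
  shows "opnorm N A \<le> c"
proof -
  have "{sqrt (\<Sum>i<N. (cmod (\<Sum>j<N. A i j * v j))\<^sup>2) | v. (\<Sum>j<N. (cmod (v j))\<^sup>2) \<le> 1}
      = (\<lambda>v. sqrt (sqnorm N (mvmul N A v))) ` {v. sqnorm N v \<le> 1}"
    unfolding sqnorm_def mvmul_def by auto
  moreover have "Sup ((\<lambda>v. sqrt (sqnorm N (mvmul N A v))) ` {v. sqnorm N v \<le> 1}) \<le> c"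
  proof (rule cSup_least)
    show "(\<lambda>v. sqrt (sqnorm N (mvmul N A v))) ` {v. sqnorm N v \<le> 1} \<noteq> {}"
      by (auto simp: sqnorm_def intro!: exI[of _ "\<lambda>_. 0"])
  next
    fix s assume "s \<in> (\<lambda>v. sqrt (sqnorm N (mvmul N A v))) ` {v. sqnorm N v \<le> 1}"
    then obtain v where s: "s = sqrt (sqnorm N (mvmul N A v))" and v: "sqnorm N v \<le> 1"
      by blast
    have "s \<le> sqrt (c\<^sup>2 * sqnorm N v)"
      unfolding s using bound real_sqrt_le_mono by blast
    also have "\<dots> = c * sqrt (sqnorm N v)"
      using \<open>0 \<le> c\<close> by (simp add: real_sqrt_mult)
    also have "\<dots> \<le> c"
      using v \<open>0 \<le> c\<close> sqnorm_nonneg[of N v] by (simp add: mult_left_le)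
    finally show "s \<le> c" .
  qed
  ultimately show ?thesis
    unfolding opnorm_def by simp
qed

section \<open>The circle metric and a grid of centres\<close>

lemma dc_commute: "dc x y = dc y x"
  by (simp add: dc_def abs_minus_commute)

lemma dc_le_abs: "dc x y \<le> \<bar>x - y\<bar>"
  by (simp add: dc_def)

lemma dc_le_one_minus_abs: "dc x y \<le> 1 - \<bar>x - y\<bar>"
  by (simp add: dc_def)

lemma dc_nonneg: "x \<in> {0..1} \<Longrightarrow> y \<in> {0..1} \<Longrightarrow> 0 \<le> dc x y"
  by (auto simp: dc_def)

lemma dc_self [simp]: "dc x x = 0"
  by (simp add: dc_def)

lemma dc_triangle: "x \<in> {0..1} \<Longrightarrow> y \<in> {0..1} \<Longrightarrow> z \<in> {0..1} \<Longrightarrow> dc x z \<le> dc x y + dc y z"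
  unfolding dc_def by (auto simp: min_def abs_if split: if_splits)

lemma grid_point_in_unit: "m < N \<Longrightarrow> real m / real N \<in> {0..1}"
  by (simp add: field_simps)

lemma finite_nat_interval: "finite {q::nat. a \<le> real q \<and> real q \<le> b}"
  by (rule finite_subset[of _ "{..nat \<lceil>b\<rceil>}"]) (auto simp: le_nat_iff ceiling_le_iff le_ceiling_iff intro: order_trans)

lemma card_nat_interval_le:
  fixes a b :: real
  shows "real (card {q::nat. a \<le> real q \<and> real q \<le> b}) \<le> max 0 (b - a + 1)"
proof -
  have "{q::nat. a \<le> real q \<and> real q \<le> b} \<subseteq> nat ` {\<lceil>a\<rceil>..\<lfloor>b\<rfloor>}"
  proof
    fix q assume "q \<in> {q::nat. a \<le> real q \<and> real q \<le> b}"
    then have "int q \<in> {\<lceil>a\<rceil>..\<lfloor>b\<rfloor>}"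
      by (simp add: ceiling_le_iff le_floor_iff)
    then show "q \<in> nat ` {\<lceil>a\<rceil>..\<lfloor>b\<rfloor>}"
      by (metis image_eqI nat_int)
  qed
  then have "card {q::nat. a \<le> real q \<and> real q \<le> b} \<le> card (nat ` {\<lceil>a\<rceil>..\<lfloor>b\<rfloor>})"
    by (intro card_mono) auto
  also have "\<dots> \<le> nat (\<lfloor>b\<rfloor> - \<lceil>a\<rceil> + 1)"
    using card_image_le[of "{\<lceil>a\<rceil>..\<lfloor>b\<rfloor>}" nat] by simp
  finally have "real (card {q::nat. a \<le> real q \<and> real q \<le> b}) \<le> real (nat (\<lfloor>b\<rfloor> - \<lceil>a\<rceil> + 1))"
    by linarith
  also have "\<dots> \<le> max 0 (b - a + 1)"
    using of_int_floor_le[of b] le_of_int_ceiling[of a] by linarith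
  finally show ?thesis .
qed

lemma grid_center_lt_one:
  assumes "0 < \<rho>" "q < nat \<lceil>1 / \<rho>\<rceil>"
  shows "real q * \<rho> < 1"
proof -
  have "real q < 1 / \<rho>"
    using assms(2) by linarith
  then show ?thesis
    using assms(1) by (simp add: field_simps)
qed

lemma grid_centers_cover:
  assumes "0 < \<rho>" "0 \<le> x" "x < 1"
  shows "\<exists>q < nat \<lceil>1 / \<rho>\<rceil>. dc x (real q * \<rho>) \<le> \<rho>"
proof (intro exI conjI)
  let ?q = "nat \<lfloor>x / \<rho>\<rfloor>"
  have "real ?q \<le> x / \<rho>" "x / \<rho> < real ?q + 1"
    using assms by auto
  then have "real ?q * \<rho> \<le> x" "x < real ?q * \<rho> + \<rho>"
    using assms(1) by (simp_all add: field_simps)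
  then show "dc x (real ?q * \<rho>) \<le> \<rho>"
    using dc_le_abs[of x "real ?q * \<rho>"] by simp
  have "x / \<rho> < 1 / \<rho>"
    using assms by (simp add: divide_strict_right_mono)
  then show "?q < nat \<lceil>1 / \<rho>\<rceil>"
    using \<open>real ?q \<le> x / \<rho>\<close> by linarith
qed

text \<open>The centres within circle distance \<open>2\<rho>\<close> of \<open>x\<close> lie in three intervals of integers, one
  for each lift \<open>x - 1\<close>, \<open>x\<close>, \<open>x + 1\<close> of \<open>x\<close>, containing at most 5, 3 and 3 of them.\<close>

lemma card_grid_centers_near:
  assumes "0 < \<rho>" "x \<in> {0..1}"
  shows "card {q \<in> {..<nat \<lceil>1 / \<rho>\<rceil>}. dc x (real q * \<rho>) \<le> 2 * \<rho>} \<le> 11"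
proof -
  define S1 where "S1 = {q::nat. x / \<rho> - 2 \<le> real q \<and> real q \<le> x / \<rho> + 2}"
  define S2 where "S2 = {q::nat. (x + 1) / \<rho> - 2 \<le> real q \<and> real q \<le> 1 / \<rho>}"
  define S3 where "S3 = {q::nat. 0 \<le> real q \<and> real q \<le> (x - 1) / \<rho> + 2}"
  have "{q \<in> {..<nat \<lceil>1 / \<rho>\<rceil>}. dc x (real q * \<rho>) \<le> 2 * \<rho>} \<subseteq> S1 \<union> S2 \<union> S3"
  proof
    fix q assume "q \<in> {q \<in> {..<nat \<lceil>1 / \<rho>\<rceil>}. dc x (real q * \<rho>) \<le> 2 * \<rho>}"
    then have q1: "real q * \<rho> < 1" and "dc x (real q * \<rho>) \<le> 2 * \<rho>"
      using grid_center_lt_one[OF assms(1)] by auto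
    then consider "\<bar>x - real q * \<rho>\<bar> \<le> 2 * \<rho>" | "real q * \<rho> - x \<ge> 1 - 2 * \<rho>"
      | "x - real q * \<rho> \<ge> 1 - 2 * \<rho>"
      unfolding dc_def by linarith
    then show "q \<in> S1 \<union> S2 \<union> S3"
    proof cases
      case 1
      then have "q \<in> S1"
        using assms(1) by (simp add: S1_def field_simps abs_le_iff)
      then show ?thesis
        by simp
    next
      case 2
      then show ?thesis
        using assms(1) q1 by (simp add: S2_def field_simps)
    next
      case 3
      then show ?thesis
        using assms(1) by (simp add: S3_def field_simps)
    qed
  qed
  moreover have "finite S1" "finite S2" "finite S3"
    unfolding S1_def S2_def S3_def by (simp_all only: finite_nat_interval)
  ultimately have "card {q \<in> {..<nat \<lceil>1 / \<rho>\<rceil>}. dc x (real q * \<rho>) \<le> 2 * \<rho>} \<le> card S1 + card S2 + card S3"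
    by (meson card_Un_le card_mono finite_UnI le_trans add_le_mono1)
  moreover have "real (card S1) \<le> 5"
    using card_nat_interval_le[of "x / \<rho> - 2" "x / \<rho> + 2"] unfolding S1_def by linarith
  moreover have "real (card S2) \<le> 3"
  proof -
    have "max 0 (1 / \<rho> - ((x + 1) / \<rho> - 2) + 1) \<le> 3"
      using assms by (auto simp: field_simps)
    then show ?thesis
      using card_nat_interval_le[of "(x + 1) / \<rho> - 2" "1 / \<rho>"] unfolding S2_def by linarith
  qed
  moreover have "real (card S3) \<le> 3"
  proof -
    have "max 0 ((x - 1) / \<rho> + 2 - 0 + 1) \<le> 3"
      using assms by (auto simp: field_simps)
    then show ?thesis
      using card_nat_interval_le[of 0 "(x - 1) / \<rho> + 2"] unfolding S3_def by linarith
  qed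
  ultimately show ?thesis
    by linarith
qed

section \<open>Commutators of diagonal and band matrices\<close>

definition band_matrix :: "nat \<Rightarrow> real \<Rightarrow> (nat \<Rightarrow> nat \<Rightarrow> complex) \<Rightarrow> bool" where
  "band_matrix N \<rho> H \<longleftrightarrow>
     (\<forall>m<N. \<forall>m'<N. H m m' \<noteq> 0 \<longrightarrow> dc (real m / real N) (real m' / real N) \<le> \<rho>)"

lemma band_matrixD:
  "band_matrix N \<rho> H \<Longrightarrow> m < N \<Longrightarrow> m' < N \<Longrightarrow> H m m' \<noteq> 0 \<Longrightarrow> dc (real m / real N) (real m' / real N) \<le> \<rho>"
  by (simp add: band_matrix_def)

lemma norm_diff_power2_le: "(cmod (x - y))\<^sup>2 \<le> 2 * (cmod x)\<^sup>2 + 2 * (cmod y)\<^sup>2"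
proof -
  have "(cmod (x - y))\<^sup>2 \<le> (cmod x + cmod y)\<^sup>2"
    by (simp add: power_mono norm_triangle_ineq4)
  also have "\<dots> \<le> 2 * (cmod x)\<^sup>2 + 2 * (cmod y)\<^sup>2"
    using sum_squares_bound[of "cmod x" "cmod y"] by (simp add: power2_sum)
  finally show ?thesis .
qed

lemma sum_if_count:
  "(\<Sum>q<(Q::nat). \<Sum>m<(N::nat). if P q m then (X m :: real) else 0)
     = (\<Sum>m<N. X m * real (card {q \<in> {..<Q}. P q m}))"
proof -
  have "(\<Sum>q<Q. \<Sum>m<N. if P q m then X m else 0) = (\<Sum>m<N. \<Sum>q<Q. if P q m then X m else 0)"
    by (rule sum.swap)
  also have "\<dots> = (\<Sum>m<N. \<Sum>q\<in>{q \<in> {..<Q}. P q m}. X m)"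
    by (rule sum.cong[OF refl]) (simp add: sum.inter_filter[symmetric])
  finally show ?thesis
    by (simp add: mult.commute)
qed

lemma sum_sqnorm_localized_le:
  assumes "0 < \<rho>"
    and bound: "\<And>q m. q < nat \<lceil>1 / \<rho>\<rceil> \<Longrightarrow> m < N \<Longrightarrow> dc (real m / real N) (real q * \<rho>) \<le> 2 * \<rho>
      \<Longrightarrow> cmod (\<psi> q m) \<le> b"
  shows "(\<Sum>q<nat \<lceil>1 / \<rho>\<rceil>. sqnorm N (\<lambda>m. if dc (real m / real N) (real q * \<rho>) \<le> 2 * \<rho> then \<psi> q m * v m else 0))
    \<le> 11 * b\<^sup>2 * sqnorm N v"
proof -
  let ?Q = "nat \<lceil>1 / \<rho>\<rceil>" and ?near = "\<lambda>q m. dc (real m / real N) (real q * \<rho>) \<le> 2 * \<rho>"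
  have "(\<Sum>q<?Q. sqnorm N (\<lambda>m. if ?near q m then \<psi> q m * v m else 0))
      \<le> (\<Sum>q<?Q. \<Sum>m<N. if ?near q m then b\<^sup>2 * (cmod (v m))\<^sup>2 else 0)"
    unfolding sqnorm_def
  proof (intro sum_mono)
    fix q m assume "q \<in> {..<?Q}" "m \<in> {..<N}"
    then have "(cmod (\<psi> q m))\<^sup>2 \<le> b\<^sup>2" if "?near q m"
      using bound[of q m] that by (intro power_mono) (auto intro: order_trans[OF norm_ge_zero])
    then show "(cmod (if ?near q m then \<psi> q m * v m else 0))\<^sup>2 \<le> (if ?near q m then b\<^sup>2 * (cmod (v m))\<^sup>2 else 0)"
      by (simp add: norm_mult power_mult_distrib mult_right_mono)
  qed
  also have "\<dots> = (\<Sum>m<N. b\<^sup>2 * (cmod (v m))\<^sup>2 * real (card {q \<in> {..<?Q}. ?near q m}))"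
    by (rule sum_if_count)
  also have "\<dots> \<le> (\<Sum>m<N. b\<^sup>2 * (cmod (v m))\<^sup>2 * 11)"
    using card_grid_centers_near[OF \<open>0 < \<rho>\<close> grid_point_in_unit]
    by (intro sum_mono mult_left_mono) auto
  also have "\<dots> = 11 * b\<^sup>2 * sqnorm N v"
    by (simp add: sqnorm_def sum_distrib_left algebra_simps)
  finally show ?thesis .
qed

text \<open>Row \<open>m\<close> of \<open>[diag \<phi>, H] v\<close> only involves entries of \<open>v\<close> within \<open>2\<rho>\<close> of a point \<open>c\<close> near
  \<open>m / N\<close>, and replacing \<open>\<phi>\<close> by \<open>\<phi> - z\<close> does not change the commutator.\<close>

lemma commutator_diag_band_row:
  assumes H_band: "band_matrix N \<rho> H"
    and "c \<in> {0..1}" "m < N" "dc (real m / real N) c \<le> \<rho>"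
  shows "mvmul N (commutator N (diag_mat \<phi>) H) v m
    = (\<phi> m - z) * mvmul N H v m
      - mvmul N H (\<lambda>m'. if dc (real m' / real N) c \<le> 2 * \<rho> then (\<phi> m' - z) * v m' else 0) m"
proof -
  have row: "mvmul N (commutator N (diag_mat \<phi>) H) v m = \<phi> m * mvmul N H v m - (\<Sum>j<N. H m j * (\<phi> j * v j))"
    using \<open>m < N\<close> unfolding mvmul_commutator mvmul_diag_mat by (simp add: mvmul_def)
  have "mvmul N H (\<lambda>m'. if dc (real m' / real N) c \<le> 2 * \<rho> then (\<phi> m' - z) * v m' else 0) m
      = (\<Sum>j<N. H m j * ((\<phi> j - z) * v j))"
    unfolding mvmul_def using \<open>m < N\<close>
  proof (simp, intro sum.cong refl)
    fix j assume "j \<in> {..<N}"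
    show "H m j * (if dc (real j / real N) c \<le> 2 * \<rho> then (\<phi> j - z) * v j else 0)
        = H m j * ((\<phi> j - z) * v j)"
    proof (cases "H m j = 0")
      case False
      then have "dc (real j / real N) (real m / real N) \<le> \<rho>"
        using band_matrixD[OF H_band] \<open>m < N\<close> \<open>j \<in> {..<N}\<close> dc_commute by fastforce
      then have "dc (real j / real N) c \<le> 2 * \<rho>"
        using dc_triangle[of "real j / real N" "real m / real N" c] assms(2-4) \<open>j \<in> {..<N}\<close>
        by (simp add: grid_point_in_unit)
      then show ?thesis
        by simp
    qed simp
  qed
  also have "\<dots> = (\<Sum>j<N. H m j * (\<phi> j * v j)) - z * (\<Sum>j<N. H m j * v j)"
    by (simp add: algebra_simps sum_subtractf sum_distrib_left)
  finally show ?thesis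
    using \<open>m < N\<close> row
    by (simp add: mvmul_def algebra_simps)
qed

lemma commutator_diag_band_row_le:
  assumes H_band: "band_matrix N \<rho> H"
    and "c \<in> {0..1}" "m < N" "dc (real m / real N) c \<le> \<rho>" "cmod (\<phi> m - z) \<le> b"
  shows "(cmod (mvmul N (commutator N (diag_mat \<phi>) H) v m))\<^sup>2
    \<le> 2 * b\<^sup>2 * (cmod (mvmul N H v m))\<^sup>2
      + 2 * (cmod (mvmul N H (\<lambda>m'. if dc (real m' / real N) c \<le> 2 * \<rho> then (\<phi> m' - z) * v m' else 0) m))\<^sup>2"
    (is "_ \<le> _ + 2 * (cmod (mvmul N H ?w m))\<^sup>2")
proof -
  have "(cmod ((\<phi> m - z) * mvmul N H v m))\<^sup>2 \<le> b\<^sup>2 * (cmod (mvmul N H v m))\<^sup>2"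
    using assms(5) by (simp add: norm_mult power_mult_distrib mult_right_mono power_mono)
  moreover have "(cmod ((\<phi> m - z) * mvmul N H v m - mvmul N H ?w m))\<^sup>2
      \<le> 2 * (cmod ((\<phi> m - z) * mvmul N H v m))\<^sup>2 + 2 * (cmod (mvmul N H ?w m))\<^sup>2"
    by (rule norm_diff_power2_le)
  moreover have "mvmul N (commutator N (diag_mat \<phi>) H) v m = (\<phi> m - z) * mvmul N H v m - mvmul N H ?w m"
    by (rule commutator_diag_band_row[OF H_band assms(2-4)])
  ultimately show ?thesis
    by simp
qed

text \<open>Near the centre \<open>q\<rho>\<close>, \<open>diag \<phi>\<close> may be replaced by the scalar \<open>\<kappa> (q\<rho>)\<close>, which commutes
  with \<open>H\<close>, at a cost \<open>O(L (\<rho> + \<delta>))\<close>; the \<open>2\<rho>\<close>-neighbourhoods of the centres overlap at most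
  11 times.\<close>

lemma commutator_diag_band_bound:
  fixes H :: "nat \<Rightarrow> nat \<Rightarrow> complex" and \<phi> :: "nat \<Rightarrow> complex" and \<kappa> :: "real \<Rightarrow> complex"
  assumes "0 < \<rho>" "0 \<le> \<delta>" "0 \<le> L"
    and H_bounded: "\<And>v. sqnorm N (mvmul N H v) \<le> h\<^sup>2 * sqnorm N v"
    and H_band: "band_matrix N \<rho> H"
    and \<phi>_near_\<kappa>: "\<And>m y. m < N \<Longrightarrow> y \<in> {0..1} \<Longrightarrow> cmod (\<phi> m - \<kappa> y) \<le> L * (dc (real m / real N) y + \<delta>)"
  shows "sqnorm N (mvmul N (commutator N (diag_mat \<phi>) H) v) \<le> 90 * (L * h * (\<rho> + \<delta>))\<^sup>2 * sqnorm N v"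
proof -
  define a where "a = L * (\<rho> + \<delta>)"
  define Q where "Q = nat \<lceil>1 / \<rho>\<rceil>"
  define near where "near q m \<longleftrightarrow> dc (real m / real N) (real q * \<rho>) \<le> 2 * \<rho>" for q m
  define w where "w q = (\<lambda>m. if near q m then (\<phi> m - \<kappa> (real q * \<rho>)) * v m else 0)" for q
  have center: "real q * \<rho> \<in> {0..1}" if "q < Q" for q
    using grid_center_lt_one[OF \<open>0 < \<rho>\<close>, of q] that \<open>0 < \<rho>\<close> by (simp add: Q_def)
  have row: "(cmod (mvmul N (commutator N (diag_mat \<phi>) H) v m))\<^sup>2
      \<le> 2 * a\<^sup>2 * (cmod (mvmul N H v m))\<^sup>2 + 2 * (\<Sum>q<Q. (cmod (mvmul N H (w q) m))\<^sup>2)" if "m < N" for m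
  proof -
    obtain q where "q < Q" and q: "dc (real m / real N) (real q * \<rho>) \<le> \<rho>"
      using grid_centers_cover[OF \<open>0 < \<rho>\<close>, of "real m / real N"] \<open>m < N\<close> by (auto simp: Q_def)
    have "L * (dc (real m / real N) (real q * \<rho>) + \<delta>) \<le> a"
      using q \<open>0 \<le> L\<close> unfolding a_def by (intro mult_left_mono) auto
    then have near_a: "cmod (\<phi> m - \<kappa> (real q * \<rho>)) \<le> a"
      using \<phi>_near_\<kappa>[OF \<open>m < N\<close> center[OF \<open>q < Q\<close>]] by linarith
    have "(cmod (mvmul N (commutator N (diag_mat \<phi>) H) v m))\<^sup>2
        \<le> 2 * a\<^sup>2 * (cmod (mvmul N H v m))\<^sup>2 + 2 * (cmod (mvmul N H (w q) m))\<^sup>2"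
      unfolding w_def near_def
      by (rule commutator_diag_band_row_le[where \<phi> = \<phi> and z = "\<kappa> (real q * \<rho>)",
          OF H_band center[OF \<open>q < Q\<close>] \<open>m < N\<close> q near_a])
    moreover have "(cmod (mvmul N H (w q) m))\<^sup>2 \<le> (\<Sum>q<Q. (cmod (mvmul N H (w q) m))\<^sup>2)"
      using \<open>q < Q\<close> by (intro member_le_sum) auto
    ultimately show ?thesis
      by linarith
  qed
  have "(\<Sum>q<Q. sqnorm N (w q)) \<le> 11 * (2 * a)\<^sup>2 * sqnorm N v"
    unfolding w_def near_def Q_def
  proof (rule sum_sqnorm_localized_le[OF \<open>0 < \<rho>\<close>])
    fix q m
    assume "q < nat \<lceil>1 / \<rho>\<rceil>" "m < N" "dc (real m / real N) (real q * \<rho>) \<le> 2 * \<rho>"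
    then have "dc (real m / real N) (real q * \<rho>) + \<delta> \<le> 2 * \<rho> + 2 * \<delta>"
      using \<open>0 \<le> \<delta>\<close> by linarith
    then have "L * (dc (real m / real N) (real q * \<rho>) + \<delta>) \<le> 2 * a"
      using mult_left_mono[OF _ \<open>0 \<le> L\<close>] by (fastforce simp: a_def algebra_simps)
    then show "cmod (\<phi> m - \<kappa> (real q * \<rho>)) \<le> 2 * a"
      using \<phi>_near_\<kappa>[of m "real q * \<rho>"] \<open>q < nat \<lceil>1 / \<rho>\<rceil>\<close> \<open>m < N\<close> center by (fastforce simp: Q_def)
  qed
  then have w_sum: "(\<Sum>q<Q. sqnorm N (w q)) \<le> 44 * a\<^sup>2 * sqnorm N v"
    by (simp add: power_mult_distrib)
  have "sqnorm N (mvmul N (commutator N (diag_mat \<phi>) H) v)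
      \<le> (\<Sum>m<N. 2 * a\<^sup>2 * (cmod (mvmul N H v m))\<^sup>2 + 2 * (\<Sum>q<Q. (cmod (mvmul N H (w q) m))\<^sup>2))"
    unfolding sqnorm_def by (intro sum_mono row) auto
  also have "\<dots> = 2 * a\<^sup>2 * sqnorm N (mvmul N H v) + 2 * (\<Sum>q<Q. sqnorm N (mvmul N H (w q)))"
    unfolding sqnorm_def sum.distrib sum_distrib_left[symmetric] by (simp add: sum.swap[of _ "{..<N}"])
  also have "\<dots> \<le> 2 * a\<^sup>2 * (h\<^sup>2 * sqnorm N v) + 2 * (\<Sum>q<Q. h\<^sup>2 * sqnorm N (w q))"
    by (intro add_mono mult_left_mono sum_mono H_bounded) auto
  also have "\<dots> = 2 * a\<^sup>2 * (h\<^sup>2 * sqnorm N v) + 2 * (h\<^sup>2 * (\<Sum>q<Q. sqnorm N (w q)))"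
    by (simp add: sum_distrib_left)
  also have "\<dots> \<le> 2 * a\<^sup>2 * (h\<^sup>2 * sqnorm N v) + 2 * (h\<^sup>2 * (44 * a\<^sup>2 * sqnorm N v))"
    using w_sum by (intro add_mono mult_left_mono) auto
  also have "\<dots> = 90 * (L * h * (\<rho> + \<delta>))\<^sup>2 * sqnorm N v"
    by (simp add: a_def power_mult_distrib)
  finally show ?thesis .
qed

section \<open>The expanding map\<close>

text \<open>Condition 1 leaves \<open>T\<close> free at the breakpoints \<open>a j\<close>; \<open>expanding_map\<close> is the representative
  that is continuous from the right and sends \<open>1\<close> to \<open>0\<close>.\<close>

definition expanding_map :: "(nat \<Rightarrow> nat) \<Rightarrow> (nat \<Rightarrow> real) \<Rightarrow> real \<Rightarrow> real" where
  "expanding_map \<Lambda> a x =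
     (if x < 1 then real (\<Lambda> (LEAST j. x < a j)) * (x - a ((LEAST j. x < a j) - 1)) else 0)"

definition max_slope :: "(nat \<Rightarrow> nat) \<Rightarrow> nat \<Rightarrow> real" where
  "max_slope \<Lambda> l = real (Max (\<Lambda> ` {1..l}))"

lemma expanding_map_one: "expanding_map \<Lambda> a 1 = 0"
  by (simp add: expanding_map_def)

context
  fixes T :: "real \<Rightarrow> real" and l :: nat and \<Lambda> :: "nat \<Rightarrow> nat" and a :: "nat \<Rightarrow> real"
  assumes cond1: "cond1 T l \<Lambda> a"
begin

lemma breakpoint_step: "j \<in> {1..l} \<Longrightarrow> a j = a (j - 1) + 1 / real (\<Lambda> j)"
  using cond1 by (simp add: cond1_def)

lemma slope_bounds:
  assumes "j \<in> {1..l}"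
  shows "2 \<le> real (\<Lambda> j)" "real (\<Lambda> j) \<le> max_slope \<Lambda> l"
  using cond1 assms by (auto simp: cond1_def max_slope_def)

lemma max_slope_ge_two: "2 \<le> max_slope \<Lambda> l"
proof -
  have "1 \<in> {1..l}"
    using cond1 by (simp add: cond1_def)
  from slope_bounds[OF this] show ?thesis
    by linarith
qed

lemma breakpoint_eq_sum: "j \<le> l \<Longrightarrow> a j = (\<Sum>i=1..j. 1 / real (\<Lambda> i))"
proof (induction j)
  case 0
  then show ?case
    using cond1 by (simp add: cond1_def)
next
  case (Suc j)
  then show ?case
    using breakpoint_step[of "Suc j"] by simp
qed

lemma breakpoint_last: "a l = 1"
  using breakpoint_eq_sum[of l] cond1 by (simp add: cond1_def)

lemma breakpoint_mono: "i \<le> j \<Longrightarrow> j \<le> l \<Longrightarrow> a i \<le> a j"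
  by (simp add: breakpoint_eq_sum sum_mono2)

lemma breakpoint_in_unit: "j \<le> l \<Longrightarrow> a j \<in> {0..1}"
  using breakpoint_mono[of 0 j] breakpoint_mono[of j l] breakpoint_last cond1 by (simp add: cond1_def)

lemma piece_exists:
  assumes "0 \<le> x" "x < 1"
  obtains j where "j \<in> {1..l}" "a (j - 1) \<le> x" "x < a j"
proof -
  let ?j = "LEAST j. x < a j"
  have "x < a l"
    using assms breakpoint_last by simp
  then have "x < a ?j" "?j \<le> l"
    by (auto intro: LeastI Least_le)
  moreover have "?j \<noteq> 0"
  proof
    assume "?j = 0"
    then have "x < a 0"
      using \<open>x < a ?j\<close> by simp
    then show False
      using assms cond1 by (simp add: cond1_def)
  qed
  moreover have "a (?j - 1) \<le> x"
    using \<open>?j \<noteq> 0\<close> not_less_Least[of "?j - 1" "\<lambda>j. x < a j"] by simp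
  ultimately show ?thesis
    by (intro that) auto
qed

lemma expanding_map_on_piece:
  assumes "j \<in> {1..l}" "a (j - 1) \<le> x" "x < a j"
  shows "expanding_map \<Lambda> a x = real (\<Lambda> j) * (x - a (j - 1))"
proof -
  have "(LEAST i. x < a i) = j"
  proof (rule Least_equality)
    show "x < a j" by fact
    show "j \<le> i" if "x < a i" for i
    proof (rule ccontr)
      assume "\<not> j \<le> i"
      then have "a i \<le> a (j - 1)"
        using assms(1) by (intro breakpoint_mono) auto
      then show False
        using that assms(2) by simp
    qed
  qed
  moreover have "x < 1"
    using assms breakpoint_in_unit[of j] by auto
  ultimately show ?thesis
    by (simp add: expanding_map_def)
qed

lemma expanding_map_piece_bounds:
  assumes "j \<in> {1..l}" "a (j - 1) \<le> x" "x < a j"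
  shows "0 \<le> expanding_map \<Lambda> a x" "expanding_map \<Lambda> a x \<le> max_slope \<Lambda> l * (x - a (j - 1))"
    and "0 \<le> 1 - expanding_map \<Lambda> a x" "1 - expanding_map \<Lambda> a x \<le> max_slope \<Lambda> l * (a j - x)"
proof -
  have S: "expanding_map \<Lambda> a x = real (\<Lambda> j) * (x - a (j - 1))"
    by (rule expanding_map_on_piece[OF assms])
  moreover have "1 - expanding_map \<Lambda> a x = real (\<Lambda> j) * (a j - x)"
    using S breakpoint_step[OF assms(1)] slope_bounds(1)[OF assms(1)] by (simp add: algebra_simps)
  ultimately show "0 \<le> expanding_map \<Lambda> a x" "expanding_map \<Lambda> a x \<le> max_slope \<Lambda> l * (x - a (j - 1))"
    "0 \<le> 1 - expanding_map \<Lambda> a x" "1 - expanding_map \<Lambda> a x \<le> max_slope \<Lambda> l * (a j - x)"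
    using assms slope_bounds[OF assms(1)] by (simp_all add: mult_right_mono)
qed

lemma expanding_map_in_unit:
  assumes "x \<in> {0..1}"
  shows "expanding_map \<Lambda> a x \<in> {0..1}"
proof (cases "x = 1")
  case False
  then obtain j where j: "j \<in> {1..l}" "a (j - 1) \<le> x" "x < a j"
    using piece_exists[of x] assms by force
  then show ?thesis
    using expanding_map_piece_bounds(1,3)[OF j] by simp
qed (simp add: expanding_map_one)

lemma expanding_map_zero: "expanding_map \<Lambda> a 0 = 0"
proof -
  have "1 \<in> {1..l}" "a 0 = 0"
    using cond1 by (simp_all add: cond1_def)
  moreover have "0 < a 1"
    using breakpoint_step[of 1] slope_bounds(1)[of 1] calculation by simp
  ultimately show ?thesis
    using expanding_map_on_piece[of 1 0] by simp
qed

lemma expanding_map_le_past_breakpoint: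
  assumes "j \<le> l" "a j \<le> y" "y \<le> 1"
  shows "expanding_map \<Lambda> a y \<le> max_slope \<Lambda> l * (y - a j)"
proof (cases "y = 1")
  case True
  then show ?thesis
    using max_slope_ge_two breakpoint_in_unit[OF assms(1)] by (simp add: expanding_map_one)
next
  case False
  then obtain k where k: "k \<in> {1..l}" "a (k - 1) \<le> y" "y < a k"
    using piece_exists[of y] assms breakpoint_in_unit[OF assms(1)] by force
  have "j \<le> k - 1"
  proof (rule ccontr)
    assume "\<not> j \<le> k - 1"
    then have "a k \<le> a j"
      using assms(1) by (intro breakpoint_mono) auto
    then show False
      using assms(2) k(3) by simp
  qed
  then have "a j \<le> a (k - 1)"
    using k(1) by (intro breakpoint_mono) auto
  then have "max_slope \<Lambda> l * (y - a (k - 1)) \<le> max_slope \<Lambda> l * (y - a j)"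
    using max_slope_ge_two by (simp add: mult_left_mono)
  then show ?thesis
    using expanding_map_piece_bounds(2)[OF k] by linarith
qed

lemma expanding_map_dist_le:
  assumes "0 \<le> x" "x \<le> y" "y \<le> 1"
  shows "dc (expanding_map \<Lambda> a x) (expanding_map \<Lambda> a y) \<le> max_slope \<Lambda> l * (y - x)"
proof (cases "x = 1")
  case False
  let ?S = "expanding_map \<Lambda> a" and ?L = "max_slope \<Lambda> l"
  obtain j where j: "j \<in> {1..l}" "a (j - 1) \<le> x" "x < a j"
    using piece_exists[of x] assms False by force
  show ?thesis
  proof (cases "y < a j")
    case True
    then have "?S y = real (\<Lambda> j) * (y - a (j - 1))"
      using j assms by (intro expanding_map_on_piece) auto
    then have "?S y - ?S x = real (\<Lambda> j) * (y - x)"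
      using expanding_map_on_piece[OF j] by (simp add: algebra_simps)
    then have "\<bar>?S x - ?S y\<bar> = real (\<Lambda> j) * (y - x)"
      using assms by (metis abs_minus_commute abs_of_nonneg diff_ge_0_iff_ge of_nat_0_le_iff
          zero_le_mult_iff)
    then have "dc (?S x) (?S y) \<le> real (\<Lambda> j) * (y - x)"
      using dc_le_abs[of "?S x" "?S y"] by simp
    also have "\<dots> \<le> ?L * (y - x)"
      using slope_bounds(2)[OF j(1)] assms by (simp add: mult_right_mono)
    finally show ?thesis .
  next
    case False
    have "?S y \<le> ?L * (y - a j)"
      using j(1) False assms by (intro expanding_map_le_past_breakpoint) auto
    moreover have "1 - ?S x \<le> ?L * (a j - x)"
      by (rule expanding_map_piece_bounds(4)[OF j])
    moreover have "dc (?S x) (?S y) \<le> 1 - ?S x + ?S y"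
      using dc_le_one_minus_abs[of "?S x" "?S y"] by linarith
    ultimately show ?thesis
      by (simp add: algebra_simps)
  qed
qed (use assms in simp)

lemma expanding_map_lipschitz:
  assumes "x \<in> {0..1}" "y \<in> {0..1}"
  shows "dc (expanding_map \<Lambda> a x) (expanding_map \<Lambda> a y) \<le> max_slope \<Lambda> l * dc x y"
proof -
  let ?S = "expanding_map \<Lambda> a" and ?L = "max_slope \<Lambda> l"
  have ordered: "dc (?S x) (?S y) \<le> ?L * dc x y" if "x \<le> y" "x \<in> {0..1}" "y \<in> {0..1}" for x y
  proof -
    have "dc (?S x) (?S y) \<le> ?L * (y - x)"
      using expanding_map_dist_le that by simp
    moreover have "dc (?S x) (?S y) \<le> ?L * (1 - (y - x))"
      \<comment> \<open>the other way round the circle, through \<open>0 \<sim> 1\<close>, where the map vanishes\<close>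
    proof -
      have "dc (?S x) (?S y) \<le> dc (?S 0) (?S x) + dc (?S y) (?S 1)"
        using dc_triangle[of "?S x" 0 "?S y"] expanding_map_in_unit that
        by (simp add: expanding_map_zero expanding_map_one dc_commute)
      also have "\<dots> \<le> ?L * (x - 0) + ?L * (1 - y)"
        using that by (intro add_mono expanding_map_dist_le) auto
      finally show ?thesis
        by (simp add: algebra_simps)
    qed
    ultimately show ?thesis
      using that by (auto simp: dc_def min_def)
  qed
  show ?thesis
  proof (cases "x \<le> y")
    case False
    then show ?thesis
      using ordered[of y x] assms by (simp add: dc_commute)
  qed (use ordered assms in simp)
qed

lemma expanding_map_iterate_in_unit: "x \<in> {0..1} \<Longrightarrow> (expanding_map \<Lambda> a ^^ n) x \<in> {0..1}"
  by (induction n) (auto simp del: atLeastAtMost_iff intro: expanding_map_in_unit)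

lemma expanding_map_iterate_lipschitz:
  assumes "x \<in> {0..1}" "y \<in> {0..1}"
  shows "dc ((expanding_map \<Lambda> a ^^ n) x) ((expanding_map \<Lambda> a ^^ n) y) \<le> max_slope \<Lambda> l ^ n * dc x y"
proof (induction n)
  case (Suc n)
  have "dc ((expanding_map \<Lambda> a ^^ Suc n) x) ((expanding_map \<Lambda> a ^^ Suc n) y)
      \<le> max_slope \<Lambda> l * dc ((expanding_map \<Lambda> a ^^ n) x) ((expanding_map \<Lambda> a ^^ n) y)"
    using expanding_map_lipschitz expanding_map_iterate_in_unit assms by simp
  also have "\<dots> \<le> max_slope \<Lambda> l * (max_slope \<Lambda> l ^ n * dc x y)"
    using Suc max_slope_ge_two by (intro mult_left_mono) auto
  finally show ?case
    by simp
qed simp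

lemma expanding_map_eq_off_breakpoints:
  assumes "x \<in> {0..1}" "x \<notin> a ` {0..l}"
  shows "T x = expanding_map \<Lambda> a x"
proof -
  have "x \<noteq> a l"
    using assms(2) by auto
  then have "x < 1"
    using assms(1) breakpoint_last by auto
  then obtain j where j: "j \<in> {1..l}" "a (j - 1) \<le> x" "x < a j"
    using piece_exists[of x] assms by force
  moreover have "a (j - 1) \<noteq> x"
    using assms(2) j(1) by force
  moreover have "\<forall>j\<in>{1..l}. \<forall>x. a (j - 1) < x \<and> x < a j \<longrightarrow> T x = real (\<Lambda> j) * (x - a (j - 1))"
    using cond1 unfolding cond1_def by blast
  ultimately show ?thesis
    using expanding_map_on_piece[OF j] by force
qed

end

section \<open>Support of the powers of a quantization\<close>

lemma mmul_nonzero_entry: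
  assumes "mmul N A B i j \<noteq> 0"
  obtains k where "k < N" "A i k \<noteq> 0" "B k j \<noteq> 0"
proof -
  have "\<not> (\<forall>k\<in>{..<N}. A i k * B k j = 0)"
    using assms sum.neutral[of "{..<N}" "\<lambda>k. A i k * B k j"] unfolding mmul_def by blast
  then obtain k where "k < N" "A i k * B k j \<noteq> 0"
    by blast
  then show ?thesis
    using that by simp
qed

context
  fixes T :: "real \<Rightarrow> real" and l :: nat and \<Lambda> :: "nat \<Rightarrow> nat" and a :: "nat \<Rightarrow> real"
    and N :: nat and U :: "nat \<Rightarrow> nat \<Rightarrow> complex"
  assumes cond1: "cond1 T l \<Lambda> a" and quantization: "is_quantization T N U"
begin

text \<open>A nonzero entry \<open>U i j\<close> means \<open>E\<^sub>j \<inter> T\<^sup>-\<^sup>1 E\<^sub>i\<close> has positive measure, so it contains a point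
  off the finitely many breakpoints, where \<open>T\<close> is the expanding map.\<close>

lemma quantization_nonzero_witness:
  assumes "i < N" "j < N" "U i j \<noteq> 0"
  obtains x where "x \<in> cell N j" "x \<in> {0..1}" "expanding_map \<Lambda> a x \<in> cell N i"
proof -
  define X where "X = cell N j \<inter> {x \<in> {0..1}. T x \<in> cell N i}"
  have "Bmat T N j i = (cmod (U i j))\<^sup>2"
    using quantization assms(1,2) by (simp add: is_quantization_def)
  then have "Bmat T N j i \<noteq> 0"
    using assms(3) by simp
  then have "measure lebesgue X \<noteq> 0"
    by (auto simp: Bmat_def X_def)
  moreover have "measure lebesgue X = 0" if "X \<subseteq> a ` {0..l}"
  proof -
    have "finite X"
      using that by (rule finite_subset) simp
    then show ?thesis
      by (intro negligible_imp_measure0 negligible_finite)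
  qed
  ultimately obtain x where x: "x \<in> X" "x \<notin> a ` {0..l}"
    by blast
  then have "x \<in> {0..1}"
    by (simp add: X_def)
  moreover have "T x = expanding_map \<Lambda> a x"
    by (rule expanding_map_eq_off_breakpoints[OF cond1 \<open>x \<in> {0..1}\<close> x(2)])
  ultimately show ?thesis
    using x(1) by (intro that[of x]) (simp_all add: X_def)
qed

lemma quantization_nonzero_near:
  assumes "i < N" "j < N" "U i j \<noteq> 0"
  shows "real N * dc (real i / real N) (expanding_map \<Lambda> a (real j / real N)) \<le> max_slope \<Lambda> l + 1"
proof -
  let ?S = "expanding_map \<Lambda> a" and ?L = "max_slope \<Lambda> l"
  obtain x where x: "x \<in> cell N j" "x \<in> {0..1}" "?S x \<in> cell N i"
    using quantization_nonzero_witness[OF assms] .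
  have N: "0 < real N"
    using assms by simp
  have close: "\<bar>real j / real N - x\<bar> \<le> 1 / real N" "\<bar>?S x - real i / real N\<bar> \<le> 1 / real N"
    using x by (auto simp: cell_def add_divide_distrib)
  have "dc (?S (real j / real N)) (?S x) \<le> ?L * dc (real j / real N) x"
    by (rule expanding_map_lipschitz[OF cond1 grid_point_in_unit[OF assms(2)] x(2)])
  also have "\<dots> \<le> ?L * (1 / real N)"
    using dc_le_abs[of "real j / real N" x] close(1) max_slope_ge_two[OF cond1]
    by (intro mult_left_mono) auto
  finally have far: "dc (?S (real j / real N)) (?S x) \<le> ?L * (1 / real N)" .
  have "dc (real i / real N) (?S (real j / real N)) = dc (?S (real j / real N)) (real i / real N)"
    by (rule dc_commute)
  also have "\<dots> \<le> dc (?S (real j / real N)) (?S x) + dc (?S x) (real i / real N)"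
    using expanding_map_in_unit[OF cond1 grid_point_in_unit[OF assms(2)]]
      expanding_map_in_unit[OF cond1 x(2)] grid_point_in_unit[OF assms(1)]
    by (intro dc_triangle)
  also have "\<dots> \<le> ?L * (1 / real N) + 1 / real N"
    using far dc_le_abs[of "?S x" "real i / real N"] close(2) by linarith
  finally show ?thesis
    using N by (simp add: field_simps)
qed

text \<open>The constant \<open>3 (L\<^sup>n - 1)\<close> dominates \<open>(L + 1) (1 + L + \<dots> + L\<^sup>n\<^sup>-\<^sup>1)\<close> since \<open>L \<ge> 2\<close>.\<close>

lemma mpow_nonzero_near:
  assumes "m < N" "j < N" "mpow N U n m j \<noteq> 0"
  shows "real N * dc (real m / real N) ((expanding_map \<Lambda> a ^^ n) (real j / real N))
    \<le> 3 * max_slope \<Lambda> l ^ n - 3"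
  using assms(2,3)
proof (induction n arbitrary: j)
  case 0
  then show ?case
    by (simp add: mid_def split: if_splits)
next
  case (Suc n)
  let ?S = "expanding_map \<Lambda> a" and ?L = "max_slope \<Lambda> l"
  obtain i where i: "i < N" "mpow N U n m i \<noteq> 0" "U i j \<noteq> 0"
    using Suc.prems by (auto elim: mmul_nonzero_entry)
  have unit: "real m / real N \<in> {0..1}" "real i / real N \<in> {0..1}" "?S (real j / real N) \<in> {0..1}"
    using assms(1) i(1) Suc.prems(1)
    by (simp_all add: grid_point_in_unit expanding_map_in_unit[OF cond1 grid_point_in_unit] del: atLeastAtMost_iff)
  let ?x = "real m / real N" and ?y = "(?S ^^ n) (real i / real N)"
    and ?z = "(?S ^^ n) (?S (real j / real N))"
  have "real N * dc ?y ?z \<le> real N * (?L ^ n * dc (real i / real N) (?S (real j / real N)))"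
    using expanding_map_iterate_lipschitz[OF cond1] unit by (simp add: mult_left_mono)
  also have "\<dots> = ?L ^ n * (real N * dc (real i / real N) (?S (real j / real N)))"
    by (simp add: mult_ac)
  also have "\<dots> \<le> ?L ^ n * (?L + 1)"
    using quantization_nonzero_near[OF i(1) Suc.prems(1) i(3)] max_slope_ge_two[OF cond1]
    by (intro mult_left_mono) auto
  finally have last_step: "real N * dc ?y ?z \<le> ?L ^ n * (?L + 1)" .
  have "dc ?x ((?S ^^ Suc n) (real j / real N)) \<le> dc ?x ?y + dc ?y ?z"
    unfolding funpow_Suc_right comp_apply
    using unit by (intro dc_triangle expanding_map_iterate_in_unit[OF cond1])
  then have "real N * dc ?x ((?S ^^ Suc n) (real j / real N)) \<le> real N * dc ?x ?y + real N * dc ?y ?z"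
    by (simp add: distrib_left[symmetric] mult_left_mono)
  also have "\<dots> \<le> (3 * ?L ^ n - 3) + ?L ^ n * (?L + 1)"
    using Suc.IH[OF i(1,2)] last_step by (rule add_mono)
  also have "\<dots> \<le> 3 * ?L ^ Suc n - 3"
    using max_slope_ge_two[OF cond1] by (simp add: algebra_simps)
  finally show ?case .
qed

end

section \<open>Lipschitz functions and their quantization\<close>

definition sup_norm :: "(real \<Rightarrow> complex) \<Rightarrow> real" where
  "sup_norm f = (SUP x\<in>{0..1}. cmod (f x))"

definition lip_const :: "(real \<Rightarrow> complex) \<Rightarrow> real" where
  "lip_const f = (SUP p\<in>{(x, y). x \<in> {0..1} \<and> y \<in> {0..1} \<and> dc x y > 0}.
     cmod (f (fst p) - f (snd p)) / dc (fst p) (snd p))"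

lemma lip_norm_eq: "lip_norm f = sup_norm f + lip_const f"
  by (simp add: lip_norm_def lip_const_def sup_norm_def)

lemma sup_norm_bound:
  assumes "in_LipIc f" "x \<in> {0..1}"
  shows "cmod (f x) \<le> sup_norm f"
proof -
  obtain B where "\<forall>y\<in>f ` {0..1}. norm y \<le> B"
    using assms(1) by (auto simp: in_LipIc_def bounded_iff)
  then have "bdd_above ((\<lambda>x. cmod (f x)) ` {0..1})"
    by (auto intro!: bdd_aboveI2)
  then show ?thesis
    unfolding sup_norm_def using assms(2) by (rule cSUP_upper2) simp
qed

lemma sup_norm_nonneg: "in_LipIc f \<Longrightarrow> 0 \<le> sup_norm f"
  using sup_norm_bound[of f 0] by (simp add: order_trans[OF norm_ge_zero])

lemma lip_const_nonneg_and_bound: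
  assumes "in_LipIc f"
  shows "0 \<le> lip_const f"
    and "x \<in> {0..1} \<Longrightarrow> y \<in> {0..1} \<Longrightarrow> cmod (f x - f y) \<le> lip_const f * dc x y"
proof -
  obtain L where L: "\<forall>x\<in>{0..1}. \<forall>y\<in>{0..1}. cmod (f x - f y) \<le> L * dc x y"
    using assms by (auto simp: in_LipIc_def)
  let ?P = "{(x, y). x \<in> {0..1} \<and> y \<in> {0..1} \<and> dc x y > 0}"
  let ?r = "\<lambda>p. cmod (f (fst p) - f (snd p)) / dc (fst p) (snd p)"
  have bdd: "bdd_above (?r ` ?P)"
    using L by (intro bdd_aboveI2[of _ _ L]) (auto simp: divide_le_eq)
  have upper: "?r p \<le> lip_const f" if "p \<in> ?P" for p
    unfolding lip_const_def by (rule cSUP_upper[OF that bdd])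
  have mem: "(0, 1 / 2) \<in> ?P" and "0 \<le> ?r (0, 1 / 2)"
    by (simp_all add: dc_def)
  then show "0 \<le> lip_const f"
    using upper[OF mem] by linarith
  assume "x \<in> {0..1}" "y \<in> {0..1}"
  show "cmod (f x - f y) \<le> lip_const f * dc x y"
  proof (cases "dc x y > 0")
    case True
    then show ?thesis
      using upper[of "(x, y)"] \<open>x \<in> {0..1}\<close> \<open>y \<in> {0..1}\<close> by (simp add: divide_le_eq)
  next
    case False
    then have "dc x y = 0"
      using dc_nonneg[OF \<open>x \<in> {0..1}\<close> \<open>y \<in> {0..1}\<close>] by simp
    then show ?thesis
      using L \<open>x \<in> {0..1}\<close> \<open>y \<in> {0..1}\<close> by fastforce
  qed
qed

lemmas lip_const_nonneg = lip_const_nonneg_and_bound(1)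
lemmas lip_const_bound = lip_const_nonneg_and_bound(2)

lemma sup_norm_le_lip_norm: "in_LipIc f \<Longrightarrow> sup_norm f \<le> lip_norm f"
  by (simp add: lip_norm_eq lip_const_nonneg)

lemma lip_const_le_lip_norm: "in_LipIc f \<Longrightarrow> lip_const f \<le> lip_norm f"
  by (simp add: lip_norm_eq sup_norm_nonneg)

lemma in_LipIc_continuous_on:
  assumes "in_LipIc f"
  shows "continuous_on {0..1} f"
proof (rule lipschitz_on_continuous_on)
  show "(lip_const f)-lipschitz_on {0..1} f"
  proof (rule lipschitz_onI)
    fix x y :: real
    assume "x \<in> {0..1}" "y \<in> {0..1}"
    then have "cmod (f x - f y) \<le> lip_const f * dc x y"
      by (rule lip_const_bound[OF assms])
    also have "\<dots> \<le> lip_const f * \<bar>x - y\<bar>"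
      by (rule mult_left_mono[OF dc_le_abs lip_const_nonneg[OF assms]])
    finally show "dist (f x) (f y) \<le> lip_const f * dist x y"
      by (simp add: dist_norm)
  qed (rule lip_const_nonneg[OF assms])
qed

lemma cell_subset_unit: "m < N \<Longrightarrow> cell N m \<subseteq> {0..1}"
  by (auto simp: cell_def field_simps)

lemma cell_average_dist_le:
  assumes "continuous_on (cell N m) f" "0 < N" "0 \<le> B"
    and bound: "\<And>x. x \<in> cell N m \<Longrightarrow> cmod (f x - z) \<le> B"
  shows "cmod (of_nat N * integral (cell N m) f - z) \<le> B"
proof -
  let ?vol = "Henstock_Kurzweil_Integration.content (cell N m)"
  have "?vol = 1 / real N"
    using assms(2) by (simp add: cell_def field_simps)
  moreover have "((\<lambda>x. f x - z) has_integral (integral (cell N m) f - ?vol *\<^sub>R z)) (cell N m)"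
    using assms(1) unfolding cell_def
    by (intro has_integral_diff integrable_integral integrable_continuous_interval has_integral_const_real)
  then have "cmod (integral (cell N m) f - ?vol *\<^sub>R z) \<le> B * ?vol"
    unfolding cell_def using assms(3) bound by (intro has_integral_bound_real) (auto simp: cell_def)
  ultimately have average: "cmod (integral (cell N m) f - (1 / real N) *\<^sub>R z) \<le> B / real N"
    by simp
  have "of_nat N * integral (cell N m) f - z = of_nat N * (integral (cell N m) f - (1 / real N) *\<^sub>R z)"
    using assms(2) by (simp add: algebra_simps scaleR_conv_of_real)
  then have "cmod (of_nat N * integral (cell N m) f - z) = real N * cmod (integral (cell N m) f - (1 / real N) *\<^sub>R z)"
    by (simp add: norm_mult)
  also have "\<dots> \<le> real N * (B / real N)"
    using average by (intro mult_left_mono) auto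
  also have "\<dots> = B"
    using assms(2) by simp
  finally show ?thesis .
qed

lemma Op_eq_diag_mat: "Op N f = diag_mat (\<lambda>m. of_nat N * integral (cell N m) f)"
  by (simp add: Op_def diag_mat_def)

lemma Op_entry_near:
  assumes "in_LipIc f" "m < N" "y \<in> {0..1}"
  shows "cmod (of_nat N * integral (cell N m) f - f y) \<le> lip_const f * (dc (real m / real N) y + 1 / real N)"
proof (rule cell_average_dist_le)
  show "continuous_on (cell N m) f"
    using in_LipIc_continuous_on[OF assms(1)] cell_subset_unit[OF assms(2)] by (rule continuous_on_subset)
  show "0 \<le> lip_const f * (dc (real m / real N) y + 1 / real N)"
    using lip_const_nonneg[OF assms(1)] dc_nonneg[OF grid_point_in_unit[OF assms(2)] assms(3)] by simp
  fix x assume x: "x \<in> cell N m"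
  have "dc x y \<le> dc x (real m / real N) + dc (real m / real N) y"
    using x cell_subset_unit[OF assms(2)] grid_point_in_unit[OF assms(2)] assms(3)
    by (intro dc_triangle) auto
  moreover have "dc x (real m / real N) \<le> 1 / real N"
    using dc_le_abs[of x "real m / real N"] x by (auto simp: cell_def add_divide_distrib)
  ultimately have "lip_const f * dc x y \<le> lip_const f * (dc (real m / real N) y + 1 / real N)"
    using lip_const_nonneg[OF assms(1)] by (intro mult_left_mono) auto
  then show "cmod (f x - f y) \<le> lip_const f * (dc (real m / real N) y + 1 / real N)"
    using lip_const_bound[OF assms(1), of x y] x cell_subset_unit[OF assms(2)] assms(3) by auto
qed (use assms in simp)

lemma sqnorm_mvmul_Op_le:
  assumes "in_LipIc g"
  shows "sqnorm N (mvmul N (Op N g) v) \<le> (sup_norm g)\<^sup>2 * sqnorm N v"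
  unfolding Op_eq_diag_mat mvmul_diag_mat sqnorm_def sum_distrib_left
proof (intro sum_mono)
  fix m assume "m \<in> {..<N}"
  have "cmod (of_nat N * integral (cell N m) g) \<le> sup_norm g"
  proof (rule cell_average_dist_le[where z = 0, simplified])
    show "continuous_on (cell N m) g"
      using in_LipIc_continuous_on[OF assms] cell_subset_unit \<open>m \<in> {..<N}\<close>
      by (auto intro: continuous_on_subset)
  next
    fix x assume "x \<in> cell N m"
    then have "x \<in> {0..1}"
      using cell_subset_unit \<open>m \<in> {..<N}\<close> by blast
    then show "cmod (g x) \<le> sup_norm g"
      by (rule sup_norm_bound[OF assms])
  qed (use \<open>m \<in> {..<N}\<close> sup_norm_nonneg[OF assms] in auto)
  then have "(cmod (of_nat N * integral (cell N m) g))\<^sup>2 \<le> (sup_norm g)\<^sup>2"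
    by (intro power_mono) auto
  then show "(cmod (if m < N then of_nat N * integral (cell N m) g * v m else 0))\<^sup>2
      \<le> (sup_norm g)\<^sup>2 * (cmod (v m))\<^sup>2"
    using \<open>m \<in> {..<N}\<close> by (simp add: norm_mult power_mult_distrib mult_right_mono)
qed

section \<open>The commutator estimate\<close>

lemma mvmul_conjugated_commutator:
  assumes "is_unitary N U"
  shows "mvmul N (commutator N (mmul N (mmul N (mpow N (madj U) n) F) (mpow N U n)) G) v
    = mvmul N (mpow N (madj U) n)
        (mvmul N (commutator N F (mmul N (mmul N (mpow N U n) G) (mpow N (madj U) n)))
          (mvmul N (mpow N U n) v))"
proof -
  have left_inverse: "mvmul N (mpow N (madj U) n) (mvmul N (mpow N U n) w) = vtrunc N w" for w
    by (rule mpow_unitary_left_inverse[OF assms])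
  show ?thesis
    by (simp add: mvmul_commutator mvmul_mmul mvmul_diff left_inverse)
qed

lemma sqnorm_conjugated_commutator_le:
  assumes "is_unitary N U"
    and bound: "\<And>w. sqnorm N (mvmul N (commutator N F (mmul N (mmul N (mpow N U n) G) (mpow N (madj U) n))) w)
      \<le> C * sqnorm N w"
  shows "sqnorm N (mvmul N (commutator N (mmul N (mmul N (mpow N (madj U) n) F) (mpow N U n)) G) v)
    \<le> C * sqnorm N v"
proof -
  have "sqnorm N (mvmul N (commutator N (mmul N (mmul N (mpow N (madj U) n) F) (mpow N U n)) G) v)
      \<le> sqnorm N (mvmul N (commutator N F (mmul N (mmul N (mpow N U n) G) (mpow N (madj U) n)))
           (mvmul N (mpow N U n) v))"
    unfolding mvmul_conjugated_commutator[OF assms(1)] by (rule sqnorm_mpow_madj_le[OF assms(1)])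
  also have "\<dots> \<le> C * sqnorm N v"
    using bound[of "mvmul N (mpow N U n) v"] by (simp add: sqnorm_mpow_unitary[OF assms(1)])
  finally show ?thesis .
qed

lemma sqnorm_conjugated_Op_le:
  assumes "is_unitary N U" "in_LipIc g"
  shows "sqnorm N (mvmul N (mmul N (mmul N (mpow N U n) (Op N g)) (mpow N (madj U) n)) v)
    \<le> (sup_norm g)\<^sup>2 * sqnorm N v"
proof -
  have "sqnorm N (mvmul N (mmul N (mmul N (mpow N U n) (Op N g)) (mpow N (madj U) n)) v)
      = sqnorm N (mvmul N (Op N g) (mvmul N (mpow N (madj U) n) v))"
    by (simp add: mvmul_mmul sqnorm_mpow_unitary[OF assms(1)])
  also have "\<dots> \<le> (sup_norm g)\<^sup>2 * sqnorm N (mvmul N (mpow N (madj U) n) v)"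
    by (rule sqnorm_mvmul_Op_le[OF assms(2)])
  also have "\<dots> \<le> (sup_norm g)\<^sup>2 * sqnorm N v"
    by (intro mult_left_mono sqnorm_mpow_madj_le[OF assms(1)]) auto
  finally show ?thesis .
qed

context
  fixes T :: "real \<Rightarrow> real" and l :: nat and \<Lambda> :: "nat \<Rightarrow> nat" and a :: "nat \<Rightarrow> real"
    and N :: nat and U :: "nat \<Rightarrow> nat \<Rightarrow> complex"
  assumes cond1: "cond1 T l \<Lambda> a" and quantization: "is_quantization T N U"
begin

lemma conjugated_diag_band:
  "band_matrix N (6 * max_slope \<Lambda> l ^ n / real N) (mmul N (mmul N (mpow N U n) (diag_mat \<psi>)) (mpow N (madj U) n))"
  unfolding band_matrix_def
proof (intro allI impI)
  fix m m'
  assume entry: "m < N" "m' < N" "mmul N (mmul N (mpow N U n) (diag_mat \<psi>)) (mpow N (madj U) n) m m' \<noteq> 0"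
  let ?P = "\<lambda>j. (expanding_map \<Lambda> a ^^ n) (real j / real N)"
  obtain j where j: "j < N" "mmul N (mpow N U n) (diag_mat \<psi>) m j \<noteq> 0" "mpow N (madj U) n j m' \<noteq> 0"
    using entry(3) by (auto elim: mmul_nonzero_entry)
  then have "mpow N U n m j \<noteq> 0"
    by (auto simp: diag_mat_def elim: mmul_nonzero_entry split: if_splits)
  then have near: "real N * dc (real m / real N) (?P j) \<le> 3 * max_slope \<Lambda> l ^ n - 3"
    by (rule mpow_nonzero_near[OF cond1 quantization entry(1) j(1)])
  have near': "real N * dc (real m' / real N) (?P j) \<le> 3 * max_slope \<Lambda> l ^ n - 3"
    using j(3) mpow_madj_entry[OF j(1) entry(2)]
    by (intro mpow_nonzero_near[OF cond1 quantization entry(2) j(1)]) simp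
  have "dc (real m / real N) (real m' / real N) \<le> dc (real m / real N) (?P j) + dc (real m' / real N) (?P j)"
    using dc_triangle[of "real m / real N" "?P j" "real m' / real N"] dc_commute[of "?P j"]
      grid_point_in_unit entry(1,2) j(1) expanding_map_iterate_in_unit[OF cond1] by simp
  then have "real N * dc (real m / real N) (real m' / real N)
      \<le> real N * dc (real m / real N) (?P j) + real N * dc (real m' / real N) (?P j)"
    by (simp add: distrib_left[symmetric] mult_left_mono)
  then have "real N * dc (real m / real N) (real m' / real N) \<le> 6 * max_slope \<Lambda> l ^ n"
    using near near' by linarith
  then show "dc (real m / real N) (real m' / real N) \<le> 6 * max_slope \<Lambda> l ^ n / real N"
    using entry(1) by (simp add: field_simps)
qed

lemma opnorm_conjugated_commutator_Op_le:
  assumes "in_LipIc f" "in_LipIc g" "0 < N"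
  shows "opnorm N (commutator N (mmul N (mmul N (mpow N (madj U) n) (Op N f)) (mpow N U n)) (Op N g))
    \<le> 70 * lip_norm f * lip_norm g * max_slope \<Lambda> l ^ n / real N"
proof -
  let ?L = "max_slope \<Lambda> l" and ?V = "mpow N U n" and ?V' = "mpow N (madj U) n"
  define \<rho> where "\<rho> = 6 * ?L ^ n / real N"
  define H where "H = mmul N (mmul N ?V (Op N g)) ?V'"
  define c where "c = lip_const f * sup_norm g * (\<rho> + 1 / real N)"
  have unitary: "is_unitary N U"
    using quantization by (simp add: is_quantization_def)
  have "1 \<le> ?L ^ n"
    using max_slope_ge_two[OF cond1] by (simp add: one_le_power)
  then have "0 < \<rho>" "\<rho> + 1 / real N \<le> 7 * ?L ^ n / real N"
    using assms(3) by (simp_all add: \<rho>_def field_simps)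
  have "0 \<le> c"
    using lip_const_nonneg[OF assms(1)] sup_norm_nonneg[OF assms(2)] \<open>0 < \<rho>\<close> by (simp add: c_def)
  have H_bounded: "sqnorm N (mvmul N H v) \<le> (sup_norm g)\<^sup>2 * sqnorm N v" for v
    unfolding H_def by (rule sqnorm_conjugated_Op_le[OF unitary assms(2)])
  have commutator_bound: "sqnorm N (mvmul N (commutator N (Op N f) H) w) \<le> 90 * c\<^sup>2 * sqnorm N w" for w
    unfolding Op_eq_diag_mat[of N f] c_def
  proof (rule commutator_diag_band_bound[where \<kappa> = f])
    show "band_matrix N \<rho> H"
      unfolding H_def Op_eq_diag_mat \<rho>_def by (rule conjugated_diag_band)
  qed (use \<open>0 < \<rho>\<close> lip_const_nonneg[OF assms(1)] H_bounded Op_entry_near[OF assms(1)] in auto)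
  have "sqnorm N (mvmul N (commutator N (mmul N (mmul N ?V' (Op N f)) ?V) (Op N g)) v) \<le> 90 * c\<^sup>2 * sqnorm N v"
    for v
    using commutator_bound unfolding H_def by (rule sqnorm_conjugated_commutator_le[OF unitary])
  then have "opnorm N (commutator N (mmul N (mmul N ?V' (Op N f)) ?V) (Op N g)) \<le> sqrt 90 * c"
    using \<open>0 \<le> c\<close> by (intro opnorm_le) (auto simp: power_mult_distrib)
  also have "\<dots> \<le> 10 * (lip_const f * sup_norm g * (7 * ?L ^ n / real N))"
  proof (rule mult_mono)
    show "sqrt 90 \<le> (10 :: real)"
      by (rule real_le_lsqrt) auto
    show "c \<le> lip_const f * sup_norm g * (7 * ?L ^ n / real N)"
      unfolding c_def using lip_const_nonneg[OF assms(1)] sup_norm_nonneg[OF assms(2)]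
        \<open>\<rho> + 1 / real N \<le> 7 * ?L ^ n / real N\<close> by (intro mult_left_mono) auto
  qed (use \<open>0 \<le> c\<close> in auto)
  also have "\<dots> \<le> 10 * (lip_norm f * lip_norm g * (7 * ?L ^ n / real N))"
    using lip_const_nonneg[OF assms(1)] sup_norm_nonneg[OF assms(2)] max_slope_ge_two[OF cond1]
      lip_const_le_lip_norm[OF assms(1)] sup_norm_le_lip_norm[OF assms(2)]
    by (intro mult_left_mono mult_right_mono mult_mono) auto
  finally show ?thesis
    by simp
qed

end

theorem proposition1:
  fixes T :: "real \<Rightarrow> real" and l :: nat and \<Lambda> :: "nat \<Rightarrow> nat" and a :: "nat \<Rightarrow> real"
  assumes "cond1 T l \<Lambda> a" and "quantizable T l a"
  shows "\<exists>D::real. \<forall>(N::nat \<Rightarrow> nat) (k::nat) (U::nat \<Rightarrow> nat \<Rightarrow> complex)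
            (f::real \<Rightarrow> complex) (g::real \<Rightarrow> complex) (n::nat).
     cond2 N l a \<and> k \<ge> 1 \<and> is_quantization T (N k) U \<and> in_LipIc f \<and> in_LipIc g \<and> n \<ge> 1
     \<longrightarrow> opnorm (N k)
           (commutator (N k)
              (mmul (N k) (mmul (N k) (mpow (N k) (madj U) n) (Op (N k) f)) (mpow (N k) U n))
              (Op (N k) g))
         \<le> 2 * D * lip_norm g * lip_norm f * real (Max (\<Lambda> ` {1..l})) ^ n / real (N k)"
proof (intro exI[of _ 35] allI impI, elim conjE)
  fix N :: "nat \<Rightarrow> nat" and k n :: nat and U :: "nat \<Rightarrow> nat \<Rightarrow> complex" and f g :: "real \<Rightarrow> complex"
  assume "cond2 N l a" "1 \<le> k" "is_quantization T (N k) U" "in_LipIc f" "in_LipIc g" "1 \<le> n"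
  moreover from \<open>cond2 N l a\<close> \<open>1 \<le> k\<close> have "0 < N k"
    by (simp add: cond2_def)
  ultimately show "opnorm (N k) (commutator (N k)
        (mmul (N k) (mmul (N k) (mpow (N k) (madj U) n) (Op (N k) f)) (mpow (N k) U n)) (Op (N k) g))
      \<le> 2 * 35 * lip_norm g * lip_norm f * real (Max (\<Lambda> ` {1..l})) ^ n / real (N k)"
    using opnorm_conjugated_commutator_Op_le[OF assms(1)] by (simp add: max_slope_def mult_ac)
qed

end
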